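(* Let $B=A^{coH}\subseteq A$ be an $H$-Hopf–Galois extension with translation map $\tau$. Then the subspace of coinvariants $$(A\otimes A)^{coH}=\{X\in A\otimes A:\ \delta^{A\otimes A}(X)=X\otimes 1_H\},$$ where $\delta^{A\otimes A}(a\otimes\tilde a)=a_{(0)}\otimes\tilde a_{(0)}\otimes a_{(1)}\tilde a_{(1)}$, coincides with $$\mathcal{C}:=\{X=\textstyle\sum a\otimes\tilde a\in A\otimes A:\ \sum a_{(0)}\otimes a_{(1)}^{\langle 1\rangle}\otimes_B a_{(1)}^{\langle 2\rangle}\tilde a=\sum a\otimes\tilde a\otimes_B 1_A \text{ in } A\otimes(A\otimes_B A)\}.$$
   Context: All algebras are unital and associative over $\mathbb{C}$; Sweedler notation with implicit summation is used. $H$ is a Hopf algebra. $A$ is a right $H$-comodule algebra with coaction $\delta^A(a)=a_{(0)}\otimes a_{(1)}$, $B=A^{coH}=\{b\in A:\delta^A(b)=b\otimes 1_H\}$. The extension is $H$-Hopf–Galois if $\chi:A\otimes_B A\to A\otimes H$, $a'\otimes_B a\mapsto a'a_{(0)}\otimes a_{(1)}$, is bijective; the translation map is $\tau(h)=\chi^{-1}(1_A\otimes h)=:h^{\langle 1\rangle}\otimes_B h^{\langle 2\rangle}$. *)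

theory Defs
  imports Complex_Main "HOL-Library.Poly_Mapping"
begin

text \<open>A tensor product V1 (x) ... (x) Vn is the quotient of the free vector
  space on V1 x ... x Vn by the subspace spanned by the multilinearity relations
  (and, for balanced tensor products over B, the balancing relations).  Elements of a
  tensor product are represented by formal sums; two representatives denote the same
  tensor iff their difference lies in the relation subspace.\<close>

type_synonym 'x fv = "'x \<Rightarrow>\<^sub>0 complex"

definition fsc :: "complex \<Rightarrow> 'x fv \<Rightarrow> 'x fv" where
  "fsc c f = Poly_Mapping.map (\<lambda>z. c * z) f"

definition gen :: "'x \<Rightarrow> 'x fv" where
  "gen x = Poly_Mapping.single x 1"

definition vext :: "(complex \<Rightarrow> 'v \<Rightarrow> 'v) \<Rightarrow> ('x \<Rightarrow> 'v::comm_monoid_add) \<Rightarrow> 'x fv \<Rightarrow> 'v" where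
  "vext sc g f = (\<Sum>x\<in>Poly_Mapping.keys f. sc (Poly_Mapping.lookup f x) (g x))"

abbreviation fext :: "('x \<Rightarrow> 'y fv) \<Rightarrow> 'x fv \<Rightarrow> 'y fv" where
  "fext \<equiv> vext fsc"

definition fmap :: "('x \<Rightarrow> 'y) \<Rightarrow> 'x fv \<Rightarrow> 'y fv" where
  "fmap \<phi> u = fext (\<lambda>x. gen (\<phi> x)) u"

definition fprod :: "('x \<Rightarrow> 'y \<Rightarrow> 'z) \<Rightarrow> 'x fv \<Rightarrow> 'y fv \<Rightarrow> 'z fv" where
  "fprod \<phi> u v = fext (\<lambda>x. fext (\<lambda>y. gen (\<phi> x y)) v) u"

definition fspan :: "'x fv set \<Rightarrow> 'x fv set" where
  "fspan S = {(\<Sum>v\<in>T. fsc (r v) v) | T r. finite T \<and> T \<subseteq> S}"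

definition bil_rel :: "(complex \<Rightarrow> 'v \<Rightarrow> 'v::ab_group_add) \<Rightarrow> (complex \<Rightarrow> 'w \<Rightarrow> 'w::ab_group_add)
    \<Rightarrow> ('v \<times> 'w) fv set" where
  "bil_rel sv sw = fspan
     ({gen (x + x', y) - gen (x, y) - gen (x', y) | x x' y. True}
    \<union> {gen (x, y + y') - gen (x, y) - gen (x, y') | x y y'. True}
    \<union> {gen (sv c x, y) - fsc c (gen (x, y)) | c x y. True}
    \<union> {gen (x, sw c y) - fsc c (gen (x, y)) | c x y. True})"

definition tri_rel :: "(complex \<Rightarrow> 'u \<Rightarrow> 'u::ab_group_add) \<Rightarrow> (complex \<Rightarrow> 'v \<Rightarrow> 'v::ab_group_add)
    \<Rightarrow> (complex \<Rightarrow> 'w \<Rightarrow> 'w::ab_group_add) \<Rightarrow> ('u \<times> 'v \<times> 'w) fv set" where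
  "tri_rel su sv sw = fspan
     ({gen (x + x', y, z) - gen (x, y, z) - gen (x', y, z) | x x' y z. True}
    \<union> {gen (x, y + y', z) - gen (x, y, z) - gen (x, y', z) | x y y' z. True}
    \<union> {gen (x, y, z + z') - gen (x, y, z) - gen (x, y, z') | x y z z'. True}
    \<union> {gen (su c x, y, z) - fsc c (gen (x, y, z)) | c x y z. True}
    \<union> {gen (x, sv c y, z) - fsc c (gen (x, y, z)) | c x y z. True}
    \<union> {gen (x, y, sw c z) - fsc c (gen (x, y, z)) | c x y z. True})"

definition bal_rel :: "(complex \<Rightarrow> 'a \<Rightarrow> 'a::ring) \<Rightarrow> 'a set \<Rightarrow> ('a \<times> 'a) fv set" where
  "bal_rel sA B = fspan (bil_rel sA sA \<union> {gen (a * b, a') - gen (a, b * a') | a b a'. b \<in> B})"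

text \<open>A (x) (A (x)_B A) = free(A x A x A) / tri_bal_rel.\<close>
definition tri_bal_rel :: "(complex \<Rightarrow> 'a \<Rightarrow> 'a::ring) \<Rightarrow> 'a set \<Rightarrow> ('a \<times> 'a \<times> 'a) fv set" where
  "tri_bal_rel sA B = fspan (tri_rel sA sA sA
      \<union> {gen (x, y * b, z) - gen (x, y, b * z) | x y b z. b \<in> B})"

definition calg :: "(complex \<Rightarrow> 'a \<Rightarrow> 'a::ring_1) \<Rightarrow> bool" where
  "calg sc \<longleftrightarrow> vector_space sc \<and>
     (\<forall>c x y. sc c (x * y) = sc c x * y \<and> sc c (x * y) = x * sc c y)"

definition hopf_algebra :: "(complex \<Rightarrow> 'h \<Rightarrow> 'h::ring_1) \<Rightarrow> ('h \<Rightarrow> ('h \<times> 'h) fv)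
    \<Rightarrow> ('h \<Rightarrow> complex) \<Rightarrow> ('h \<Rightarrow> 'h) \<Rightarrow> bool" where
  "hopf_algebra sH \<Delta> \<epsilon> S \<longleftrightarrow> calg sH
   \<comment> \<open>comultiplication: linear, coassociative, algebra map\<close>
   \<and> (\<forall>h k. \<Delta> (h + k) - (\<Delta> h + \<Delta> k) \<in> bil_rel sH sH)
   \<and> (\<forall>c h. \<Delta> (sH c h) - fsc c (\<Delta> h) \<in> bil_rel sH sH)
   \<and> (\<forall>h. fext (\<lambda>(x, y). fmap (\<lambda>(u, v). (u, v, y)) (\<Delta> x)) (\<Delta> h)
          - fext (\<lambda>(x, y). fmap (\<lambda>(u, v). (x, u, v)) (\<Delta> y)) (\<Delta> h) \<in> tri_rel sH sH sH)
   \<and> \<Delta> 1 - gen (1, 1) \<in> bil_rel sH sH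
   \<and> (\<forall>h k. \<Delta> (h * k) - fprod (\<lambda>(x, y) (x', y'). (x * x', y * y')) (\<Delta> h) (\<Delta> k) \<in> bil_rel sH sH)
   \<comment> \<open>counit: linear, counital, algebra map\<close>
   \<and> (\<forall>h k. \<epsilon> (h + k) = \<epsilon> h + \<epsilon> k) \<and> (\<forall>c h. \<epsilon> (sH c h) = c * \<epsilon> h)
   \<and> (\<forall>h. vext sH (\<lambda>(x, y). sH (\<epsilon> x) y) (\<Delta> h) = h)
   \<and> (\<forall>h. vext sH (\<lambda>(x, y). sH (\<epsilon> y) x) (\<Delta> h) = h)
   \<and> \<epsilon> 1 = 1 \<and> (\<forall>h k. \<epsilon> (h * k) = \<epsilon> h * \<epsilon> k)
   \<comment> \<open>antipode: linear, convolution inverse of the identity\<close>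
   \<and> (\<forall>h k. S (h + k) = S h + S k) \<and> (\<forall>c h. S (sH c h) = sH c (S h))
   \<and> (\<forall>h. vext sH (\<lambda>(x, y). S x * y) (\<Delta> h) = sH (\<epsilon> h) 1)
   \<and> (\<forall>h. vext sH (\<lambda>(x, y). x * S y) (\<Delta> h) = sH (\<epsilon> h) 1)"

definition comodule_algebra :: "(complex \<Rightarrow> 'a \<Rightarrow> 'a::ring_1) \<Rightarrow> (complex \<Rightarrow> 'h \<Rightarrow> 'h::ring_1)
    \<Rightarrow> ('h \<Rightarrow> ('h \<times> 'h) fv) \<Rightarrow> ('h \<Rightarrow> complex) \<Rightarrow> ('a \<Rightarrow> ('a \<times> 'h) fv) \<Rightarrow> bool" where
  "comodule_algebra sA sH \<Delta> \<epsilon> \<delta> \<longleftrightarrow> calg sA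
   \<and> (\<forall>a a'. \<delta> (a + a') - (\<delta> a + \<delta> a') \<in> bil_rel sA sH)
   \<and> (\<forall>c a. \<delta> (sA c a) - fsc c (\<delta> a) \<in> bil_rel sA sH)
   \<and> (\<forall>a. fext (\<lambda>(x, h). fmap (\<lambda>(y, k). (y, k, h)) (\<delta> x)) (\<delta> a)
          - fext (\<lambda>(x, h). fmap (\<lambda>(k, l). (x, k, l)) (\<Delta> h)) (\<delta> a) \<in> tri_rel sA sH sH)
   \<and> (\<forall>a. vext sA (\<lambda>(x, h). sA (\<epsilon> h) x) (\<delta> a) = a)
   \<and> \<delta> 1 - gen (1, 1) \<in> bil_rel sA sH
   \<and> (\<forall>a a'. \<delta> (a * a') - fprod (\<lambda>(x, h) (y, k). (x * y, h * k)) (\<delta> a) (\<delta> a') \<in> bil_rel sA sH)"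

definition coinv :: "(complex \<Rightarrow> 'a \<Rightarrow> 'a::ring_1) \<Rightarrow> (complex \<Rightarrow> 'h \<Rightarrow> 'h::ring_1)
    \<Rightarrow> ('a \<Rightarrow> ('a \<times> 'h) fv) \<Rightarrow> 'a set" where
  "coinv sA sH \<delta> = {b. \<delta> b - gen (b, 1) \<in> bil_rel sA sH}"

definition galois_map :: "('a \<Rightarrow> ('a \<times> 'h) fv) \<Rightarrow> ('a::ring_1 \<times> 'a) fv \<Rightarrow> ('a \<times> 'h) fv" where
  "galois_map \<delta> f = fext (\<lambda>(a', a). fmap (\<lambda>(x, h). (a' * x, h)) (\<delta> a)) f"

text \<open>chi is bijective as a map between the quotients A (x)_B A and A (x) H.\<close>
definition hopf_galois :: "(complex \<Rightarrow> 'a \<Rightarrow> 'a::ring_1) \<Rightarrow> (complex \<Rightarrow> 'h \<Rightarrow> 'h::ring_1)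
    \<Rightarrow> ('a \<Rightarrow> ('a \<times> 'h) fv) \<Rightarrow> bool" where
  "hopf_galois sA sH \<delta> \<longleftrightarrow>
     (\<forall>f f'. galois_map \<delta> f - galois_map \<delta> f' \<in> bil_rel sA sH
              \<longrightarrow> f - f' \<in> bal_rel sA (coinv sA sH \<delta>))
   \<and> (\<forall>g. \<exists>f. galois_map \<delta> f - g \<in> bil_rel sA sH)"

text \<open>tau is (a representative of) the translation map: tau h = chi^{-1}(1 (x) h).\<close>
definition translation_map :: "(complex \<Rightarrow> 'a \<Rightarrow> 'a::ring_1) \<Rightarrow> (complex \<Rightarrow> 'h \<Rightarrow> 'h::ring_1)
    \<Rightarrow> ('a \<Rightarrow> ('a \<times> 'h) fv) \<Rightarrow> ('h \<Rightarrow> ('a \<times> 'a) fv) \<Rightarrow> bool" where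
  "translation_map sA sH \<delta> \<tau> \<longleftrightarrow> (\<forall>h. galois_map \<delta> (\<tau> h) - gen (1, h) \<in> bil_rel sA sH)"

text \<open>(A (x) A)^{coH}, as a set of representatives (it is a union of classes).\<close>
definition tensor_coinv :: "(complex \<Rightarrow> 'a \<Rightarrow> 'a::ring_1) \<Rightarrow> (complex \<Rightarrow> 'h \<Rightarrow> 'h::ring_1)
    \<Rightarrow> ('a \<Rightarrow> ('a \<times> 'h) fv) \<Rightarrow> ('a \<times> 'a) fv set" where
  "tensor_coinv sA sH \<delta> = {X.
     fext (\<lambda>(a, a'). fprod (\<lambda>(x, h) (y, k). (x, y, h * k)) (\<delta> a) (\<delta> a')) X
       - fmap (\<lambda>(a, a'). (a, a', 1)) X \<in> tri_rel sA sA sH}"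

definition setC :: "(complex \<Rightarrow> 'a \<Rightarrow> 'a::ring_1) \<Rightarrow> (complex \<Rightarrow> 'h \<Rightarrow> 'h::ring_1)
    \<Rightarrow> ('a \<Rightarrow> ('a \<times> 'h) fv) \<Rightarrow> ('h \<Rightarrow> ('a \<times> 'a) fv) \<Rightarrow> ('a \<times> 'a) fv set" where
  "setC sA sH \<delta> \<tau> = {X.
     fext (\<lambda>(a, a'). fext (\<lambda>(x, h). fmap (\<lambda>(y, z). (x, y, z * a')) (\<tau> h)) (\<delta> a)) X
       - fmap (\<lambda>(a, a'). (a, a', 1)) X \<in> tri_bal_rel sA (coinv sA sH \<delta>)}"

end

theory Submission
  imports Defs
begin

text \<open>
  The Galois map \<chi> : A \<otimes>_B A \<rightarrow> A \<otimes> H is bijective and, being left A-linear, has the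
  inverse a \<otimes> h \<mapsto> a \<tau>(h); hence id_A \<otimes> \<chi> : A \<otimes> (A \<otimes>_B A) \<rightarrow> A \<otimes> A \<otimes> H is bijective too.
  It sends \<Sum> a_(0) \<otimes> a_(1)^<1> \<otimes>_B a_(1)^<2> a' to \<Sum> a_(0) \<otimes> \<chi>(\<tau>(a_(1)) a'), which is
  \<Sum> a_(0) \<otimes> (1 \<otimes> a_(1)) \<delta>(a') = \<delta>^{A\<otimes>A}(X) because \<chi>(f a') = \<chi>(f) \<delta>(a'), and it sends
  X \<otimes>_B 1 to X \<otimes> 1 because \<delta>(1) = 1 \<otimes> 1.  So id_A \<otimes> \<chi> carries the equation defining C
  onto the coinvariance equation.  Tensors are formal sums modulo relation subspaces, so every
  map is defined on formal sums and shown to preserve these subspaces.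
\<close>

section \<open>Free vector spaces\<close>

lemma lookup_fsc [simp]: "Poly_Mapping.lookup (fsc c f) x = c * Poly_Mapping.lookup f x"
  unfolding fsc_def by (simp add: map.rep_eq when_def)

interpretation fv: module "fsc :: complex \<Rightarrow> 'x fv \<Rightarrow> 'x fv"
  by standard (rule poly_mapping_eqI; simp add: lookup_add algebra_simps)+

lemma fspan_eq_span: "fspan = fv.span"
  by (simp add: fun_eq_iff fspan_def fv.span_explicit)

lemma fext_superset:
  assumes "finite K" "Poly_Mapping.keys u \<subseteq> K"
  shows "fext g u = (\<Sum>x\<in>K. fsc (Poly_Mapping.lookup u x) (g x))"
  unfolding vext_def
  by (rule sum.mono_neutral_left) (use assms in \<open>auto simp: in_keys_iff\<close>)

lemma fext_add [simp]: "fext g (u + v) = fext g u + fext g v"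
proof -
  let ?K = "Poly_Mapping.keys u \<union> Poly_Mapping.keys v"
  have "fext g (u + v) = (\<Sum>x\<in>?K. fsc (Poly_Mapping.lookup (u + v) x) (g x))"
    by (intro fext_superset keys_add) simp
  also have "\<dots> = (\<Sum>x\<in>?K. fsc (Poly_Mapping.lookup u x) (g x))
                 + (\<Sum>x\<in>?K. fsc (Poly_Mapping.lookup v x) (g x))"
    by (simp add: lookup_add fv.scale_left_distrib sum.distrib)
  also have "\<dots> = fext g u + fext g v"
    by (subst (1 2) fext_superset[where K = ?K]) auto
  finally show ?thesis .
qed

lemma fext_zero [simp]: "fext g 0 = 0"
  unfolding vext_def by simp

lemma fext_fsc [simp]: "fext g (fsc c u) = fsc c (fext g u)"
proof -
  have "fext g (fsc c u)
      = (\<Sum>x\<in>Poly_Mapping.keys u. fsc (Poly_Mapping.lookup (fsc c u) x) (g x))"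
    by (intro fext_superset) (auto simp: in_keys_iff)
  then show ?thesis by (simp add: vext_def fv.scale_sum_right)
qed

lemma module_hom_fext: "module_hom fsc fsc (fext g)"
  by (simp add: module_hom_iff fv.module_axioms)

lemma fext_diff [simp]: "fext g (u - v) = fext g u - fext g v"
  using module_hom.diff[OF module_hom_fext] .

lemma fext_gen [simp]: "fext g (gen x) = g x"
  unfolding vext_def gen_def by simp

lemma fext_cong: "(\<And>x. x \<in> Poly_Mapping.keys u \<Longrightarrow> g x = g' x) \<Longrightarrow> fext g u = fext g' u"
  unfolding vext_def by simp

lemma fext_fun_diff: "fext (\<lambda>x. g x - g' x) u = fext g u - fext g' u"
  unfolding vext_def by (simp add: fv.scale_right_diff_distrib sum_subtractf)

lemma fext_fun_fsc: "fext (\<lambda>x. fsc c (g x)) u = fsc c (fext g u)"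
  unfolding vext_def by (simp add: fv.scale_sum_right mult.commute)

lemma fext_comp [simp]: "fext g (fext h u) = fext (\<lambda>x. fext g (h x)) u"
  unfolding vext_def[of fsc h] by (simp add: module_hom.sum[OF module_hom_fext]) (simp add: vext_def)

lemma fext_gen_id [simp]: "fext gen u = u"
proof (rule poly_mapping_eqI)
  fix y
  show "Poly_Mapping.lookup (fext gen u) y = Poly_Mapping.lookup u y"
    unfolding vext_def gen_def
    by (simp add: lookup_sum lookup_single when_def in_keys_iff
        if_distrib[where f = "\<lambda>z. _ * z"] sum.delta cong: if_cong)
qed

lemma module_hom_apply_fext:
  assumes "module_hom fsc fsc F"
  shows "F (fext g u) = fext (\<lambda>x. F (g x)) u"
proof -
  interpret F: module_hom fsc fsc F by (fact assms)
  show ?thesis by (simp add: vext_def F.sum F.scale)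
qed

lemma fmap_fmap: "fmap \<phi> (fmap \<psi> u) = fmap (\<phi> \<circ> \<psi>) u"
  by (simp add: fmap_def)

lemma fext_in_subspace:
  "fv.subspace R \<Longrightarrow> (\<And>x. x \<in> Poly_Mapping.keys u \<Longrightarrow> g x \<in> R) \<Longrightarrow> fext g u \<in> R"
  unfolding vext_def by (auto intro!: fv.subspace_sum fv.subspace_scale)

lemma fext_span_subspace:
  assumes "w \<in> fv.span S" "fv.subspace R" "\<And>s. s \<in> S \<Longrightarrow> fext g s \<in> R"
  shows "fext g w \<in> R"
proof -
  have "fv.subspace {w. fext g w \<in> R}"
    using assms(2) by (simp add: fv.subspace_def)
  then show ?thesis using assms(3) by (rule fv.span_induct[OF assms(1)]) auto
qed

section \<open>Relation subspaces\<close>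

lemma subspace_bil_rel [simp]: "fv.subspace (bil_rel sv sw)"
  by (simp add: bil_rel_def fspan_eq_span)

lemma subspace_tri_rel [simp]: "fv.subspace (tri_rel su sv sw)"
  by (simp add: tri_rel_def fspan_eq_span)

lemma subspace_bal_rel [simp]: "fv.subspace (bal_rel sA B)"
  by (simp add: bal_rel_def fspan_eq_span)

lemma subspace_tri_bal_rel [simp]: "fv.subspace (tri_bal_rel sA B)"
  by (simp add: tri_bal_rel_def fspan_eq_span)

lemma subspace_diff_cong:
  assumes "fv.subspace R" "u - u' \<in> R" "v - v' \<in> R"
  shows "u - v \<in> R \<longleftrightarrow> u' - v' \<in> R"
proof -
  have "u - v = (u' - v') + ((u - u') - (v - v'))" "u' - v' = (u - v) - ((u - u') - (v - v'))"
    by (simp_all add: algebra_simps)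
  then show ?thesis using assms by (metis fv.subspace_add fv.subspace_diff)
qed

lemma bil_rel_add_left: "gen (x + x', y) - gen (x, y) - gen (x', y) \<in> bil_rel sv sw"
  and bil_rel_add_right: "gen (x, y + y') - gen (x, y) - gen (x, y') \<in> bil_rel sv sw"
  and bil_rel_scale_left: "gen (sv c x, y) - fsc c (gen (x, y)) \<in> bil_rel sv sw"
  and bil_rel_scale_right: "gen (x, sw c y) - fsc c (gen (x, y)) \<in> bil_rel sv sw"
  unfolding bil_rel_def fspan_eq_span by (intro fv.span_base; blast)+

lemma tri_rel_add_left: "gen (x + x', y, z) - gen (x, y, z) - gen (x', y, z) \<in> tri_rel su sv sw"
  and tri_rel_add_mid: "gen (x, y + y', z) - gen (x, y, z) - gen (x, y', z) \<in> tri_rel su sv sw"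
  and tri_rel_add_right: "gen (x, y, z + z') - gen (x, y, z) - gen (x, y, z') \<in> tri_rel su sv sw"
  and tri_rel_scale_left: "gen (su c x, y, z) - fsc c (gen (x, y, z)) \<in> tri_rel su sv sw"
  and tri_rel_scale_mid: "gen (x, sv c y, z) - fsc c (gen (x, y, z)) \<in> tri_rel su sv sw"
  and tri_rel_scale_right: "gen (x, y, sw c z) - fsc c (gen (x, y, z)) \<in> tri_rel su sv sw"
  unfolding tri_rel_def fspan_eq_span by (rule fv.span_base, fast)+

lemma bil_rel_subset_bal_rel: "bil_rel sA sA \<subseteq> bal_rel sA B"
  unfolding bal_rel_def fspan_eq_span using fv.span_superset by blast

lemma bal_rel_balance: "b \<in> B \<Longrightarrow> gen (a * b, a') - gen (a, b * a') \<in> bal_rel sA B"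
  unfolding bal_rel_def fspan_eq_span by (intro fv.span_base) blast

lemma tri_rel_subset_tri_bal_rel: "tri_rel sA sA sA \<subseteq> tri_bal_rel sA B"
  unfolding tri_bal_rel_def fspan_eq_span using fv.span_superset by blast

lemma tri_bal_rel_balance: "b \<in> B \<Longrightarrow> gen (x, y * b, z) - gen (x, y, b * z) \<in> tri_bal_rel sA B"
  unfolding tri_bal_rel_def fspan_eq_span by (intro fv.span_base) blast

lemma fext_bil_rel:
  assumes "w \<in> bil_rel sv sw" "fv.subspace R"
    and "\<And>x x' y. g (x + x', y) - g (x, y) - g (x', y) \<in> R"
    and "\<And>x y y'. g (x, y + y') - g (x, y) - g (x, y') \<in> R"
    and "\<And>c x y. g (sv c x, y) - fsc c (g (x, y)) \<in> R"
    and "\<And>c x y. g (x, sw c y) - fsc c (g (x, y)) \<in> R"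
  shows "fext g w \<in> R"
  by (rule fext_span_subspace[OF assms(1)[unfolded bil_rel_def fspan_eq_span] assms(2)])
    (use assms(3-6) in auto)

lemma fext_tri_rel:
  assumes "w \<in> tri_rel su sv sw" "fv.subspace R"
    and "\<And>x x' y z. g (x + x', y, z) - g (x, y, z) - g (x', y, z) \<in> R"
    and "\<And>x y y' z. g (x, y + y', z) - g (x, y, z) - g (x, y', z) \<in> R"
    and "\<And>x y z z'. g (x, y, z + z') - g (x, y, z) - g (x, y, z') \<in> R"
    and "\<And>c x y z. g (su c x, y, z) - fsc c (g (x, y, z)) \<in> R"
    and "\<And>c x y z. g (x, sv c y, z) - fsc c (g (x, y, z)) \<in> R"
    and "\<And>c x y z. g (x, y, sw c z) - fsc c (g (x, y, z)) \<in> R"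
  shows "fext g w \<in> R"
  by (rule fext_span_subspace[OF assms(1)[unfolded tri_rel_def fspan_eq_span] assms(2)])
    (use assms(3-8) in auto)

lemma fext_bal_rel:
  assumes "w \<in> bal_rel sA B" "fv.subspace R"
    and "\<And>w. w \<in> bil_rel sA sA \<Longrightarrow> fext g w \<in> R"
    and "\<And>a b a'. b \<in> B \<Longrightarrow> g (a * b, a') - g (a, b * a') \<in> R"
  shows "fext g w \<in> R"
  by (rule fext_span_subspace[OF assms(1)[unfolded bal_rel_def fspan_eq_span] assms(2)])
    (use assms(3,4) in auto)

lemma fext_tri_bal_rel:
  assumes "w \<in> tri_bal_rel sA B" "fv.subspace R"
    and "\<And>w. w \<in> tri_rel sA sA sA \<Longrightarrow> fext g w \<in> R"
    and "\<And>x y b z. b \<in> B \<Longrightarrow> g (x, y * b, z) - g (x, y, b * z) \<in> R"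
  shows "fext g w \<in> R"
  by (rule fext_span_subspace[OF assms(1)[unfolded tri_bal_rel_def fspan_eq_span] assms(2)])
    (use assms(3,4) in auto)

section \<open>Multiplication operators on tensors\<close>

lemma calg_scale_mult_left: "calg s \<Longrightarrow> s c x * y = s c (x * y)"
  and calg_mult_scale_right: "calg s \<Longrightarrow> x * s c y = s c (x * y)"
  unfolding calg_def by metis+

definition lmul :: "'a::times \<Rightarrow> ('a \<times> 'b) fv \<Rightarrow> ('a \<times> 'b) fv" where
  "lmul y w = fmap (\<lambda>(u, v). (y * u, v)) w"

definition rmul :: "('a \<times> 'b::times) fv \<Rightarrow> 'b \<Rightarrow> ('a \<times> 'b) fv" where
  "rmul w b = fmap (\<lambda>(u, v). (u, v * b)) w"

definition ltensor :: "'a \<Rightarrow> 'b fv \<Rightarrow> ('a \<times> 'b) fv" where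
  "ltensor a w = fmap (Pair a) w"

definition tmul :: "('a::times \<times> 'b::times) fv \<Rightarrow> ('a \<times> 'b) fv \<Rightarrow> ('a \<times> 'b) fv" where
  "tmul u v = fprod (\<lambda>(x, h) (y, k). (x * y, h * k)) u v"

lemma lmul_add [simp]: "lmul y (u + v) = lmul y u + lmul y v"
  and lmul_diff [simp]: "lmul y (u - v) = lmul y u - lmul y v"
  and lmul_fsc [simp]: "lmul y (fsc c u) = fsc c (lmul y u)"
  and lmul_gen [simp]: "lmul y (gen (x, h)) = gen (y * x, h)"
  and lmul_fext: "lmul y (fext g w) = fext (\<lambda>x. lmul y (g x)) w"
  by (simp_all add: lmul_def fmap_def)

lemma ltensor_diff [simp]: "ltensor a (u - v) = ltensor a u - ltensor a v"
  and ltensor_fsc [simp]: "ltensor a (fsc c u) = fsc c (ltensor a u)"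
  and ltensor_gen [simp]: "ltensor a (gen q) = gen (a, q)"
  and ltensor_fext: "ltensor a (fext g w) = fext (\<lambda>x. ltensor a (g x)) w"
  by (simp_all add: ltensor_def fmap_def)

lemma lmul_lmul: "lmul y (lmul p w) = lmul (y * p) (w :: ('a::semigroup_mult \<times> 'b) fv)"
  unfolding lmul_def fmap_def by (auto simp: mult.assoc split: prod.split intro!: fext_cong)

lemma tmul_fext_left: "tmul (fext g u) v = fext (\<lambda>x. tmul (g x) v) u"
  by (simp add: tmul_def fprod_def)

lemma tmul_diff_left: "tmul (u - u') v = tmul u v - tmul u' v"
  by (simp add: tmul_def fprod_def)

lemma tmul_gen_left: "tmul (gen (x, h)) v = fext (\<lambda>(y, k). gen (x * y, h * k)) v"
  by (simp add: tmul_def fprod_def case_prod_unfold)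

lemma tmul_unit_left: "tmul (gen (b, 1)) v = lmul b (v :: ('a::times \<times> 'h::monoid_mult) fv)"
  unfolding tmul_gen_left lmul_def fmap_def by (rule fext_cong) auto

lemma lmul_tmul: "lmul y (tmul u v) = tmul (lmul y u) (v :: ('a::semigroup_mult \<times> 'b::times) fv)"
  unfolding tmul_def fprod_def lmul_def fmap_def
  by (auto simp: mult.assoc split: prod.split intro!: fext_cong)

lemma lmul_bil_rel:
  assumes "calg sA" "w \<in> bil_rel sA sX"
  shows "lmul y w \<in> bil_rel sA sX"
  unfolding lmul_def fmap_def
  by (rule fext_bil_rel[OF assms(2)])
    (simp_all add: distrib_left calg_mult_scale_right[OF assms(1)] bil_rel_add_left
      bil_rel_add_right bil_rel_scale_left bil_rel_scale_right)

lemma lmul_bal_rel: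
  assumes "calg sA" "w \<in> bal_rel sA B"
  shows "lmul y w \<in> bal_rel sA B"
  using assms(2) unfolding lmul_def fmap_def
proof (rule fext_bal_rel)
  fix w assume "w \<in> bil_rel sA sA"
  then show "fext (\<lambda>x. gen (case x of (u, v) \<Rightarrow> (y * u, v))) w \<in> bal_rel sA B"
    using lmul_bil_rel[OF assms(1)] bil_rel_subset_bal_rel unfolding lmul_def fmap_def by blast
qed (simp_all add: mult.assoc[symmetric] bal_rel_balance)

lemma lmul_add_left: "lmul (y + y' :: 'a::ring) w - lmul y w - lmul y' w \<in> bil_rel sA sX"
  unfolding lmul_def fmap_def fext_fun_diff[symmetric]
  by (rule fext_in_subspace) (auto simp: distrib_right bil_rel_add_left)

lemma lmul_scale_left: "calg sA \<Longrightarrow> lmul (sA c y) w - fsc c (lmul y w) \<in> bil_rel sA sX"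
  unfolding lmul_def fmap_def fext_fun_fsc[symmetric] fext_fun_diff[symmetric]
  by (rule fext_in_subspace) (auto simp: calg_scale_mult_left bil_rel_scale_left)

lemma ltensor_bil_rel: "w \<in> bil_rel s1 s2 \<Longrightarrow> ltensor a w \<in> tri_rel s0 s1 s2"
  unfolding ltensor_def fmap_def
  by (rule fext_bil_rel)
    (auto intro: tri_rel_add_mid tri_rel_add_right tri_rel_scale_mid tri_rel_scale_right)

lemma ltensor_bal_rel: "w \<in> bal_rel sA B \<Longrightarrow> ltensor a w \<in> tri_bal_rel sA B"
  unfolding ltensor_def fmap_def
proof (rule fext_bal_rel)
  fix w assume "w \<in> bil_rel sA sA"
  then show "fext (\<lambda>x. gen (Pair a x)) w \<in> tri_bal_rel sA B"
    using ltensor_bil_rel tri_rel_subset_tri_bal_rel unfolding ltensor_def fmap_def by blast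
qed (auto intro: tri_bal_rel_balance)

lemma ltensor_add_left: "ltensor (a + a') w - ltensor a w - ltensor a' w \<in> tri_rel s0 s1 s2"
  unfolding ltensor_def fmap_def fext_fun_diff[symmetric]
  by (rule fext_in_subspace) (auto simp: tri_rel_add_left)

lemma ltensor_scale_left: "ltensor (s0 c a) w - fsc c (ltensor a w) \<in> tri_rel s0 s1 s2"
  unfolding ltensor_def fmap_def fext_fun_fsc[symmetric] fext_fun_diff[symmetric]
  by (rule fext_in_subspace) (auto simp: tri_rel_scale_left)

lemma tmul_bil_rel_left:
  assumes "calg sA" "calg sH" "u \<in> bil_rel sA sH"
  shows "tmul u v \<in> bil_rel sA sH"
  unfolding tmul_def fprod_def
  by (rule fext_bil_rel[OF assms(3)])
    (simp_all add: fext_fun_diff[symmetric] fext_fun_fsc[symmetric] case_prod_unfold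
      distrib_right calg_scale_mult_left[OF assms(1)] calg_scale_mult_left[OF assms(2)]
      fext_in_subspace bil_rel_add_left bil_rel_add_right bil_rel_scale_left bil_rel_scale_right)

section \<open>Tensoring with the identity\<close>

definition id_tensor :: "('b fv \<Rightarrow> 'c fv) \<Rightarrow> ('a \<times> 'b) fv \<Rightarrow> ('a \<times> 'c) fv" where
  "id_tensor F w = fext (\<lambda>(a, q). ltensor a (F (gen q))) w"

lemma id_tensor_diff [simp]: "id_tensor F (u - v) = id_tensor F u - id_tensor F v"
  by (simp add: id_tensor_def)

lemma id_tensor_fext: "id_tensor F (fext g u) = fext (\<lambda>x. id_tensor F (g x)) u"
  by (simp add: id_tensor_def)

lemma id_tensor_ltensor:
  assumes "module_hom fsc fsc F"
  shows "id_tensor F (ltensor a u) = ltensor a (F u)"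
proof -
  have "id_tensor F (ltensor a u) = ltensor a (fext (\<lambda>q. F (gen q)) u)"
    by (simp add: id_tensor_def ltensor_def fmap_def)
  also have "\<dots> = ltensor a (F u)"
    using module_hom_apply_fext[OF assms, of gen u] by simp
  finally show ?thesis .
qed

lemma id_tensor_comp:
  assumes "module_hom fsc fsc G"
  shows "id_tensor G (id_tensor F w) = id_tensor (G \<circ> F) w"
  unfolding id_tensor_def[of F] id_tensor_fext
  by (simp add: id_tensor_ltensor[OF assms] case_prod_unfold id_tensor_def[of "G \<circ> F"])

lemma id_tensor_minus_id:
  assumes "\<And>u. F u - u \<in> bal_rel sA B"
  shows "id_tensor F w - w \<in> tri_bal_rel sA B"
proof -
  have "id_tensor F w - w = fext (\<lambda>(a, q). ltensor a (F (gen q) - gen q)) w"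
    by (simp add: id_tensor_def fext_fun_diff case_prod_unfold)
  also have "\<dots> \<in> tri_bal_rel sA B"
    using ltensor_bal_rel[OF assms] by (intro fext_in_subspace) (auto simp del: ltensor_diff)
  finally show ?thesis .
qed

lemma id_tensor_tri_rel_subspace:
  assumes "w \<in> tri_rel s0 s1 s2" "module_hom fsc fsc F" "fv.subspace R"
    and "\<And>u a. u \<in> bil_rel s1 s2 \<Longrightarrow> ltensor a (F u) \<in> R"
    and "\<And>a a' u. ltensor (a + a') u - ltensor a u - ltensor a' u \<in> R"
    and "\<And>c a u. ltensor (s0 c a) u - fsc c (ltensor a u) \<in> R"
  shows "id_tensor F w \<in> R"
  unfolding id_tensor_def
proof (rule fext_tri_rel[OF assms(1,3)], goal_cases)
  interpret F: module_hom fsc fsc F by (fact assms(2))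
  case 1 show ?case using assms(5) by simp
  case 2 show ?case using assms(4)[OF bil_rel_add_left] by (simp add: F.diff)
  case 3 show ?case using assms(4)[OF bil_rel_add_right] by (simp add: F.diff)
  case 4 show ?case using assms(6) by simp
  case 5 show ?case using assms(4)[OF bil_rel_scale_left] by (simp add: F.diff F.scale)
  case 6 show ?case using assms(4)[OF bil_rel_scale_right] by (simp add: F.diff F.scale)
qed

lemma id_tensor_tri_rel:
  assumes "w \<in> tri_rel s0 s1 s2" "module_hom fsc fsc F"
    and "\<And>u. u \<in> bil_rel s1 s2 \<Longrightarrow> F u \<in> bil_rel t1 t2"
  shows "id_tensor F w \<in> tri_rel s0 t1 t2"
  by (rule id_tensor_tri_rel_subspace[OF assms(1,2)])
    (simp_all add: ltensor_bil_rel assms(3) ltensor_add_left ltensor_scale_left)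

lemma id_tensor_tri_rel_tri_bal_rel:
  assumes "w \<in> tri_rel sA s1 s2" "module_hom fsc fsc F"
    and "\<And>u. u \<in> bil_rel s1 s2 \<Longrightarrow> F u \<in> bal_rel sA B"
  shows "id_tensor F w \<in> tri_bal_rel sA B"
  by (rule id_tensor_tri_rel_subspace[OF assms(1,2)])
    (auto intro: ltensor_bal_rel assms(3) subsetD[OF tri_rel_subset_tri_bal_rel]
      ltensor_add_left ltensor_scale_left)

lemma id_tensor_tri_bal_rel:
  assumes "w \<in> tri_bal_rel sA B" "module_hom fsc fsc F"
    and "\<And>u. u \<in> bal_rel sA B \<Longrightarrow> F u \<in> bil_rel t1 t2"
  shows "id_tensor F w \<in> tri_rel sA t1 t2"
  unfolding id_tensor_def
proof (rule fext_tri_bal_rel[OF assms(1) subspace_tri_rel])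
  interpret F: module_hom fsc fsc F by (fact assms(2))
  show "fext (\<lambda>(a, q). ltensor a (F (gen q))) w \<in> tri_rel sA t1 t2" if "w \<in> tri_rel sA sA sA" for w
    using id_tensor_tri_rel[OF that assms(2)] bil_rel_subset_bal_rel assms(3)
    unfolding id_tensor_def by blast
  show "(\<lambda>(a, q). ltensor a (F (gen q))) (x, y * b, z) - (\<lambda>(a, q). ltensor a (F (gen q))) (x, y, b * z)
      \<in> tri_rel sA t1 t2" if "b \<in> B" for x y b z
    using ltensor_bil_rel[OF assms(3)[OF bal_rel_balance[OF that]]] by (simp add: F.diff)
qed

section \<open>Hopf-Galois extensions\<close>

text \<open>In the notation of the paper, for X = \<Sum> a \<otimes> a':
  tensor_coaction \<delta> X = \<delta>^{A\<otimes>A}(X),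
  translated_coaction \<delta> \<tau> X = \<Sum> a_(0) \<otimes> a_(1)^<1> \<otimes> a_(1)^<2> a', and
  unit_right X = X \<otimes> 1.\<close>

definition tensor_coaction ::
    "('a \<Rightarrow> ('a \<times> 'h) fv) \<Rightarrow> ('a \<times> 'a) fv \<Rightarrow> ('a \<times> 'a \<times> 'h::times) fv" where
  "tensor_coaction \<delta> X =
     fext (\<lambda>(a, a'). fprod (\<lambda>(x, h) (y, k). (x, y, h * k)) (\<delta> a) (\<delta> a')) X"

definition translated_coaction :: "('a \<Rightarrow> ('a \<times> 'h) fv) \<Rightarrow> ('h \<Rightarrow> ('a \<times> 'a) fv)
    \<Rightarrow> ('a \<times> 'a) fv \<Rightarrow> ('a \<times> 'a \<times> 'a::times) fv" where
  "translated_coaction \<delta> \<tau> X =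
     fext (\<lambda>(a, a'). fext (\<lambda>(x, h). fmap (\<lambda>(y, z). (x, y, z * a')) (\<tau> h)) (\<delta> a)) X"

definition unit_right :: "('a \<times> 'b) fv \<Rightarrow> ('a \<times> 'b \<times> 'c::one) fv" where
  "unit_right X = fmap (\<lambda>(a, b). (a, b, 1)) X"

lemma tensor_coinv_eq:
  "tensor_coinv sA sH \<delta> = {X. tensor_coaction \<delta> X - unit_right X \<in> tri_rel sA sA sH}"
  by (simp add: tensor_coinv_def tensor_coaction_def unit_right_def)

lemma setC_eq:
  "setC sA sH \<delta> \<tau>
    = {X. translated_coaction \<delta> \<tau> X - unit_right X \<in> tri_bal_rel sA (coinv sA sH \<delta>)}"
  by (simp add: setC_def translated_coaction_def unit_right_def)

lemma tensor_coaction_eq: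
  fixes X :: "('a::monoid_mult \<times> 'a) fv"
  shows "tensor_coaction \<delta> X
    = fext (\<lambda>(a, a'). fext (\<lambda>(x, h). ltensor x (tmul (gen (1, h)) (\<delta> a'))) (\<delta> a)) X"
  unfolding tensor_coaction_def fprod_def
  by (auto simp: tmul_gen_left ltensor_fext split: prod.split intro!: fext_cong)

lemma translated_coaction_eq:
  "translated_coaction \<delta> \<tau> X
    = fext (\<lambda>(a, a'). fext (\<lambda>(x, h). ltensor x (rmul (\<tau> h) a')) (\<delta> a)) X"
  unfolding translated_coaction_def rmul_def ltensor_def fmap_fmap
  by (auto split: prod.split intro!: fext_cong arg_cong2[where f = fmap])

locale hopf_galois_extension =
  fixes sA :: "complex \<Rightarrow> 'a::ring_1 \<Rightarrow> 'a" and sH :: "complex \<Rightarrow> 'h::ring_1 \<Rightarrow> 'h"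
    and \<Delta> :: "'h \<Rightarrow> ('h \<times> 'h) fv" and \<epsilon> :: "'h \<Rightarrow> complex"
    and \<delta> :: "'a \<Rightarrow> ('a \<times> 'h) fv" and \<tau> :: "'h \<Rightarrow> ('a \<times> 'a) fv"
  assumes calg_H: "calg sH"
    and comodule: "comodule_algebra sA sH \<Delta> \<epsilon> \<delta>"
    and galois: "hopf_galois sA sH \<delta>"
    and translation: "translation_map sA sH \<delta> \<tau>"
begin

lemma calg_A: "calg sA"
  and coaction_add: "\<delta> (a + a') - (\<delta> a + \<delta> a') \<in> bil_rel sA sH"
  and coaction_scale: "\<delta> (sA c a) - fsc c (\<delta> a) \<in> bil_rel sA sH"
  and coaction_one: "\<delta> 1 - gen (1, 1) \<in> bil_rel sA sH"
  and coaction_mult: "\<delta> (a * a') - tmul (\<delta> a) (\<delta> a') \<in> bil_rel sA sH"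
  using comodule unfolding comodule_algebra_def tmul_def by blast+

lemma galois_map_inj:
  "galois_map \<delta> f - galois_map \<delta> f' \<in> bil_rel sA sH \<Longrightarrow> f - f' \<in> bal_rel sA (coinv sA sH \<delta>)"
  using galois unfolding hopf_galois_def by blast

lemma galois_map_translation: "galois_map \<delta> (\<tau> h) - gen (1, h) \<in> bil_rel sA sH"
  using translation unfolding translation_map_def by blast

lemma galois_map_eq: "galois_map \<delta> f = fext (\<lambda>(y, z). lmul y (\<delta> z)) f"
  unfolding galois_map_def lmul_def ..

lemma module_hom_galois_map: "module_hom fsc fsc (galois_map \<delta>)"
  using module_hom_fext by (simp add: galois_map_eq[abs_def])

lemma galois_map_add [simp]: "galois_map \<delta> (u + v) = galois_map \<delta> u + galois_map \<delta> v"
  and galois_map_diff [simp]: "galois_map \<delta> (u - v) = galois_map \<delta> u - galois_map \<delta> v"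
  and galois_map_fsc [simp]: "galois_map \<delta> (fsc c u) = fsc c (galois_map \<delta> u)"
  and galois_map_gen [simp]: "galois_map \<delta> (gen (y, z)) = lmul y (\<delta> z)"
  by (simp_all add: galois_map_eq)

lemma galois_map_lmul: "galois_map \<delta> (lmul x f) = lmul x (galois_map \<delta> f)"
  unfolding galois_map_eq lmul_def[of x f] fmap_def lmul_fext
  by (auto simp: lmul_lmul split: prod.split intro!: fext_cong)

lemma lmul_coinv_coaction:
  assumes "b \<in> coinv sA sH \<delta>"
  shows "lmul b (\<delta> z) - \<delta> (b * z) \<in> bil_rel sA sH"
proof -
  have "gen (b, 1) - \<delta> b \<in> bil_rel sA sH"
    using assms fv.subspace_neg[OF subspace_bil_rel] unfolding coinv_def by fastforce
  then have "tmul (gen (b, 1) - \<delta> b) (\<delta> z) \<in> bil_rel sA sH"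
    by (rule tmul_bil_rel_left[OF calg_A calg_H])
  moreover have "tmul (\<delta> b) (\<delta> z) - \<delta> (b * z) \<in> bil_rel sA sH"
    using fv.subspace_neg[OF subspace_bil_rel coaction_mult] by simp
  moreover have "lmul b (\<delta> z) - \<delta> (b * z)
      = tmul (gen (b, 1) - \<delta> b) (\<delta> z) + (tmul (\<delta> b) (\<delta> z) - \<delta> (b * z))"
    by (simp add: tmul_diff_left tmul_unit_left)
  ultimately show ?thesis by (metis fv.subspace_add subspace_bil_rel)
qed

lemma galois_map_bal_rel:
  assumes "w \<in> bal_rel sA (coinv sA sH \<delta>)"
  shows "galois_map \<delta> w \<in> bil_rel sA sH"
  unfolding galois_map_eq
proof (rule fext_bal_rel[OF assms subspace_bil_rel])
  fix u assume "u \<in> bil_rel sA sA"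
  then show "fext (\<lambda>(y, z). lmul y (\<delta> z)) u \<in> bil_rel sA sH"
  proof (rule fext_bil_rel[OF _ subspace_bil_rel], goal_cases)
    case 1 show ?case by (simp add: lmul_add_left)
    case 2 show ?case using lmul_bil_rel[OF calg_A coaction_add] by (simp add: diff_diff_eq)
    case 3 show ?case by (simp add: lmul_scale_left[OF calg_A])
    case 4 show ?case using lmul_bil_rel[OF calg_A coaction_scale] by simp
  qed
next
  fix a b a' assume "b \<in> coinv sA sH \<delta>"
  then show "(\<lambda>(y, z). lmul y (\<delta> z)) (a * b, a') - (\<lambda>(y, z). lmul y (\<delta> z)) (a, b * a')
      \<in> bil_rel sA sH"
    using lmul_bil_rel[OF calg_A lmul_coinv_coaction] by (simp add: lmul_lmul)
qed

lemma translation_add: "\<tau> (h + h') - (\<tau> h + \<tau> h') \<in> bal_rel sA (coinv sA sH \<delta>)"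
proof (rule galois_map_inj)
  have "galois_map \<delta> (\<tau> (h + h')) - galois_map \<delta> (\<tau> h + \<tau> h')
      = (galois_map \<delta> (\<tau> (h + h')) - gen (1, h + h')) - (galois_map \<delta> (\<tau> h) - gen (1, h))
        - (galois_map \<delta> (\<tau> h') - gen (1, h')) + (gen (1, h + h') - gen (1, h) - gen (1, h'))"
    by (simp add: algebra_simps)
  also have "\<dots> \<in> bil_rel sA sH"
    by (intro fv.subspace_add fv.subspace_diff subspace_bil_rel galois_map_translation
        bil_rel_add_right)
  finally show "galois_map \<delta> (\<tau> (h + h')) - galois_map \<delta> (\<tau> h + \<tau> h') \<in> bil_rel sA sH" .
qed

lemma translation_scale: "\<tau> (sH c h) - fsc c (\<tau> h) \<in> bal_rel sA (coinv sA sH \<delta>)"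
proof (rule galois_map_inj)
  have "galois_map \<delta> (\<tau> (sH c h)) - galois_map \<delta> (fsc c (\<tau> h))
      = (galois_map \<delta> (\<tau> (sH c h)) - gen (1, sH c h)) - fsc c (galois_map \<delta> (\<tau> h) - gen (1, h))
        + (gen (1, sH c h) - fsc c (gen (1, h)))"
    by (simp add: algebra_simps fv.scale_right_diff_distrib)
  also have "\<dots> \<in> bil_rel sA sH"
    by (intro fv.subspace_add fv.subspace_diff fv.subspace_scale subspace_bil_rel
        galois_map_translation bil_rel_scale_right)
  finally show "galois_map \<delta> (\<tau> (sH c h)) - galois_map \<delta> (fsc c (\<tau> h)) \<in> bil_rel sA sH" .
qed

definition galois_inv :: "('a \<times> 'h) fv \<Rightarrow> ('a \<times> 'a) fv" where
  "galois_inv u = fext (\<lambda>(p, h). lmul p (\<tau> h)) u"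

lemma module_hom_galois_inv: "module_hom fsc fsc galois_inv"
  using module_hom_fext by (simp add: galois_inv_def[abs_def])

lemma galois_inv_bil_rel:
  assumes "u \<in> bil_rel sA sH"
  shows "galois_inv u \<in> bal_rel sA (coinv sA sH \<delta>)"
  unfolding galois_inv_def
proof (rule fext_bil_rel[OF assms subspace_bal_rel], goal_cases)
  case 1 show ?case using lmul_add_left bil_rel_subset_bal_rel by fastforce
  case 2 show ?case using lmul_bal_rel[OF calg_A translation_add] by (simp add: diff_diff_eq)
  case 3 show ?case using lmul_scale_left[OF calg_A] bil_rel_subset_bal_rel by fastforce
  case 4 show ?case using lmul_bal_rel[OF calg_A translation_scale] by simp
qed

lemma galois_map_galois_inv: "galois_map \<delta> (galois_inv u) - u \<in> bil_rel sA sH"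
proof -
  have "galois_map \<delta> (galois_inv u) - u
      = fext (\<lambda>(p, h). lmul p (galois_map \<delta> (\<tau> h) - gen (1, h))) u"
    by (simp add: galois_inv_def module_hom_apply_fext[OF module_hom_galois_map] galois_map_lmul
        fext_fun_diff case_prod_unfold)
  also have "\<dots> \<in> bil_rel sA sH"
    using lmul_bil_rel[OF calg_A galois_map_translation]
    by (intro fext_in_subspace) (auto simp del: lmul_diff)
  finally show ?thesis .
qed

lemma galois_inv_galois_map: "galois_inv (galois_map \<delta> f) - f \<in> bal_rel sA (coinv sA sH \<delta>)"
  by (rule galois_map_inj) (rule galois_map_galois_inv)

lemma galois_map_rmul: "galois_map \<delta> (rmul f a) - tmul (galois_map \<delta> f) (\<delta> a) \<in> bil_rel sA sH"
proof -
  have "galois_map \<delta> (rmul f a) - tmul (galois_map \<delta> f) (\<delta> a)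
      = fext (\<lambda>(y, z). lmul y (\<delta> (z * a) - tmul (\<delta> z) (\<delta> a))) f"
    by (simp add: galois_map_eq rmul_def fmap_def tmul_fext_left lmul_tmul fext_fun_diff
        case_prod_unfold)
  also have "\<dots> \<in> bil_rel sA sH"
    using lmul_bil_rel[OF calg_A coaction_mult]
    by (intro fext_in_subspace) (auto simp del: lmul_diff)
  finally show ?thesis .
qed

lemma galois_map_translation_rmul:
  "galois_map \<delta> (rmul (\<tau> h) a) - tmul (gen (1, h)) (\<delta> a) \<in> bil_rel sA sH"
proof -
  have "galois_map \<delta> (rmul (\<tau> h) a) - tmul (gen (1, h)) (\<delta> a)
      = (galois_map \<delta> (rmul (\<tau> h) a) - tmul (galois_map \<delta> (\<tau> h)) (\<delta> a))
        + tmul (galois_map \<delta> (\<tau> h) - gen (1, h)) (\<delta> a)"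
    by (simp add: tmul_diff_left)
  also have "\<dots> \<in> bil_rel sA sH"
    by (intro fv.subspace_add subspace_bil_rel galois_map_rmul
        tmul_bil_rel_left[OF calg_A calg_H galois_map_translation])
  finally show ?thesis .
qed

lemma id_tensor_galois_map_cong:
  "id_tensor (galois_map \<delta>) u - id_tensor (galois_map \<delta>) v \<in> tri_rel sA sA sH
     \<longleftrightarrow> u - v \<in> tri_bal_rel sA (coinv sA sH \<delta>)"
proof
  assume "u - v \<in> tri_bal_rel sA (coinv sA sH \<delta>)"
  then have "id_tensor (galois_map \<delta>) (u - v) \<in> tri_rel sA sA sH"
    by (rule id_tensor_tri_bal_rel[OF _ module_hom_galois_map galois_map_bal_rel])
  then show "id_tensor (galois_map \<delta>) u - id_tensor (galois_map \<delta>) v \<in> tri_rel sA sA sH"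
    by simp
next
  assume "id_tensor (galois_map \<delta>) u - id_tensor (galois_map \<delta>) v \<in> tri_rel sA sA sH"
  then have "id_tensor galois_inv (id_tensor (galois_map \<delta>) u - id_tensor (galois_map \<delta>) v)
      \<in> tri_bal_rel sA (coinv sA sH \<delta>)"
    by (rule id_tensor_tri_rel_tri_bal_rel[OF _ module_hom_galois_inv galois_inv_bil_rel])
  moreover have inverse: "id_tensor galois_inv (id_tensor (galois_map \<delta>) w) - w
      \<in> tri_bal_rel sA (coinv sA sH \<delta>)" for w
    unfolding id_tensor_comp[OF module_hom_galois_inv]
    by (rule id_tensor_minus_id) (simp add: galois_inv_galois_map)
  ultimately show "u - v \<in> tri_bal_rel sA (coinv sA sH \<delta>)"
    using subspace_diff_cong[OF subspace_tri_bal_rel inverse inverse] by simp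
qed

lemma id_tensor_translated_coaction:
  "id_tensor (galois_map \<delta>) (translated_coaction \<delta> \<tau> X) - tensor_coaction \<delta> X \<in> tri_rel sA sA sH"
proof -
  have "id_tensor (galois_map \<delta>) (translated_coaction \<delta> \<tau> X) - tensor_coaction \<delta> X
      = fext (\<lambda>(a, a'). fext (\<lambda>(x, h).
          ltensor x (galois_map \<delta> (rmul (\<tau> h) a') - tmul (gen (1, h)) (\<delta> a'))) (\<delta> a)) X"
    by (simp add: translated_coaction_eq tensor_coaction_eq id_tensor_fext
        id_tensor_ltensor[OF module_hom_galois_map] fext_fun_diff case_prod_unfold)
  also have "\<dots> \<in> tri_rel sA sA sH"
    using ltensor_bil_rel[OF galois_map_translation_rmul]
    by (auto simp del: ltensor_diff galois_map_diff intro!: fext_in_subspace)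
  finally show ?thesis .
qed

lemma id_tensor_unit_right:
  "id_tensor (galois_map \<delta>) (unit_right X) - unit_right X \<in> tri_rel sA sA sH"
proof -
  have "id_tensor (galois_map \<delta>) (unit_right X) - unit_right X
      = fext (\<lambda>(a, a'). ltensor a (lmul a' (\<delta> 1 - gen (1, 1)))) X"
    by (simp add: unit_right_def fmap_def id_tensor_def fext_fun_diff case_prod_unfold)
  also have "\<dots> \<in> tri_rel sA sA sH"
    using ltensor_bil_rel[OF lmul_bil_rel[OF calg_A coaction_one]]
    by (intro fext_in_subspace) (auto simp del: ltensor_diff lmul_diff)
  finally show ?thesis .
qed

theorem tensor_coinv_eq_setC: "tensor_coinv sA sH \<delta> = setC sA sH \<delta> \<tau>"
proof (rule set_eqI)
  fix X
  have "X \<in> setC sA sH \<delta> \<tau>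
      \<longleftrightarrow> translated_coaction \<delta> \<tau> X - unit_right X \<in> tri_bal_rel sA (coinv sA sH \<delta>)"
    by (simp add: setC_eq)
  also have "\<dots> \<longleftrightarrow> id_tensor (galois_map \<delta>) (translated_coaction \<delta> \<tau> X)
      - id_tensor (galois_map \<delta>) (unit_right X) \<in> tri_rel sA sA sH"
    by (rule id_tensor_galois_map_cong[symmetric])
  also have "\<dots> \<longleftrightarrow> tensor_coaction \<delta> X - unit_right X \<in> tri_rel sA sA sH"
    by (rule subspace_diff_cong[OF subspace_tri_rel id_tensor_translated_coaction
          id_tensor_unit_right])
  also have "\<dots> \<longleftrightarrow> X \<in> tensor_coinv sA sH \<delta>"
    by (simp add: tensor_coinv_eq)
  finally show "X \<in> tensor_coinv sA sH \<delta> \<longleftrightarrow> X \<in> setC sA sH \<delta> \<tau>"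
    by blast
qed

end

theorem lemma3p1:
  fixes sA :: "complex \<Rightarrow> 'a::ring_1 \<Rightarrow> 'a"
    and sH :: "complex \<Rightarrow> 'h::ring_1 \<Rightarrow> 'h"
    and \<Delta> :: "'h \<Rightarrow> ('h \<times> 'h) fv" and \<epsilon> :: "'h \<Rightarrow> complex" and S :: "'h \<Rightarrow> 'h"
    and \<delta> :: "'a \<Rightarrow> ('a \<times> 'h) fv" and \<tau> :: "'h \<Rightarrow> ('a \<times> 'a) fv"
  assumes "hopf_algebra sH \<Delta> \<epsilon> S"
    and "comodule_algebra sA sH \<Delta> \<epsilon> \<delta>"
    and "hopf_galois sA sH \<delta>"
    and "translation_map sA sH \<delta> \<tau>"
  shows "tensor_coinv sA sH \<delta> = setC sA sH \<delta> \<tau>"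
proof -
  interpret hopf_galois_extension sA sH \<Delta> \<epsilon> \<delta> \<tau>
    using assms by unfold_locales (simp_all add: hopf_algebra_def)
  show ?thesis by (rule tensor_coinv_eq_setC)
qed

end
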